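(* Let $k$ be a field of characteristic $0$, let $n_0<n_1$ be positive integers with $\gcd(n_0,n_1)=1$, and let $S=\langle (0,n_1),(n_0,n_1-n_0),(n_1,0)\rangle\subseteq\mathbb{N}^2$. Let $S_1=\langle n_0,n_1\rangle$ and $S_2=\langle n_1-n_0,n_1\rangle$ be the projections of $S$ onto the first and second coordinates. Then: \begin{enumerate} \item If $S_1\neq\mathbb{N}$ and $S_2\neq\mathbb{N}$, then $\mathrm{Der}_k(k[S])$ is minimally generated by $\left\{ t\frac{\partial}{\partial t},\ t^{n_0(n_1-1)-n_1+1}u^{(n_1-1)(n_1-n_0)}\frac{\partial}{\partial t},\ u\frac{\partial}{\partial u},\ t^{n_0(n_1-1)}u^{(n_1-1)(n_1-n_0)-n_1+1}\frac{\partial}{\partial u}\right\}$. \item If $S_1=\mathbb{N}$ and $S_2\neq\mathbb{N}$, then $\mathrm{Der}_k(k[S])$ is minimally generated by $\left\{ t\frac{\partial}{\partial t},\ u^{1+(n_1-2)n_1}\frac{\partial}{\partial t},\ u\frac{\partial}{\partial u},\ t^{n_1-1}u^{(n_1-1)(n_1-2)}\frac{\partial}{\partial u}\right\}$. \item If $S_1\neq\mathbb{N}$ and $S_2=\mathbb{N}$, then $\mathrm{Der}_k(k[S])$ is minimally generated by $\left\{ t\frac{\partial}{\partial t},\ t^{n_0(n_1-1)-n_1+1}u^{n_1-1}\frac{\partial}{\partial t},\ u\frac{\partial}{\partial u},\ t^{n_0(n_1-1)}\frac{\partial}{\partial u}\right\}$. \item If $S_1=S_2=\mathbb{N}$, then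 $\mathrm{Der}_k(k[S])$ is minimally generated by $\left\{ t\frac{\partial}{\partial t},\ u\frac{\partial}{\partial t},\ u\frac{\partial}{\partial u},\ t\frac{\partial}{\partial u}\right\}$. \end{enumerate}
   Context: For an affine semigroup $S\subseteq\mathbb{N}^2$, the semigroup ring is $k[S]=\bigoplus_{(s_1,s_2)\in S}k\,t^{s_1}u^{s_2}\subseteq k[t,u]$, where $t,u$ are indeterminates (the first coordinate is the exponent of $t$, the second that of $u$). $\mathrm{Der}_k(k[S])$ is the $k[S]$-module of $k$-derivations of $k[S]$; every such derivation extends uniquely to the fraction field $k(t,u)$ and is written as $f\frac{\partial}{\partial t}+g\frac{\partial}{\partial u}$. "Minimally generated" refers to a minimal generating set of $\mathrm{Der}_k(k[S])$ as a $k[S]$-module. $\langle a_0,\dots,a_m\rangle$ denotes the set of $\mathbb{N}$-linear combinations of $a_0,\dots,a_m$. *)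

theory Defs
  imports "HOL-Computational_Algebra.Polynomial"
begin

text \<open>Bivariate polynomials k[t,u] are represented as 'k poly poly = (k[t])[u]:
  the coefficient of t^i u^j in p is coeff (coeff p j) i.\<close>

definition tu_monom :: "nat \<Rightarrow> nat \<Rightarrow> 'k::comm_semiring_1 poly poly" where
  "tu_monom a b = monom (monom 1 a) b"

definition gen2 :: "nat \<Rightarrow> nat \<Rightarrow> nat set" where
  "gen2 a b = {x * a + y * b | x y. True}"

definition semigroupS :: "nat \<Rightarrow> nat \<Rightarrow> (nat \<times> nat) set" where
  "semigroupS n0 n1 =
     {(x * 0 + y * n0 + z * n1, x * n1 + y * (n1 - n0) + z * 0) | x y z. True}"

definition semigroup_ring :: "(nat \<times> nat) set \<Rightarrow> 'k::comm_semiring_1 poly poly set" where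
  "semigroup_ring S = {p. \<forall>i j. coeff (coeff p j) i \<noteq> 0 \<longrightarrow> (i, j) \<in> S}"

text \<open>k-derivations of a k-subalgebra A of k[t,u] (maps A to A; behaviour outside A irrelevant).\<close>
definition is_derivation :: "'k::field poly poly set \<Rightarrow> ('k poly poly \<Rightarrow> 'k poly poly) \<Rightarrow> bool" where
  "is_derivation A D \<longleftrightarrow>
     (\<forall>p\<in>A. D p \<in> A) \<and>
     (\<forall>p\<in>A. \<forall>q\<in>A. D (p + q) = D p + D q) \<and>
     (\<forall>c. \<forall>p\<in>A. D (smult [:c:] p) = smult [:c:] (D p)) \<and>
     (\<forall>p\<in>A. \<forall>q\<in>A. D (p * q) = p * D q + q * D p)"

definition in_span :: "'k::field poly poly set \<Rightarrow> ('k poly poly \<Rightarrow> 'k poly poly) set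
     \<Rightarrow> ('k poly poly \<Rightarrow> 'k poly poly) \<Rightarrow> bool" where
  "in_span A G D \<longleftrightarrow> (\<exists>F c. finite F \<and> F \<subseteq> G \<and> (\<forall>g\<in>F. c g \<in> A) \<and>
       (\<forall>p\<in>A. D p = (\<Sum>g\<in>F. c g * g p)))"

definition generates_Der :: "'k::field poly poly set \<Rightarrow> ('k poly poly \<Rightarrow> 'k poly poly) set \<Rightarrow> bool" where
  "generates_Der A G \<longleftrightarrow> (\<forall>D. is_derivation A D \<longrightarrow> in_span A G D)"

definition minimally_generates_Der :: "'k::field poly poly set \<Rightarrow> ('k poly poly \<Rightarrow> 'k poly poly) set \<Rightarrow> bool" where
  "minimally_generates_Der A G \<longleftrightarrow>
     (\<forall>g\<in>G. is_derivation A g) \<and> generates_Der A G \<and>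
     (\<forall>H. H \<subset> G \<longrightarrow> \<not> generates_Der A H)"

definition dT :: "nat \<Rightarrow> nat \<Rightarrow> 'k::field poly poly \<Rightarrow> 'k poly poly" where
  "dT a b p = tu_monom a b * map_poly pderiv p"

definition dU :: "nat \<Rightarrow> nat \<Rightarrow> 'k::field poly poly \<Rightarrow> 'k poly poly" where
  "dU a b p = tu_monom a b * pderiv p"

end

theory Submission
  imports Defs
begin

(* Write x = u^n1, y = t^n0 u^(n1-n0) and z = t^n1. The ring k[S] is spanned by the monomials
   x^a y^b z^c, so a derivation D of k[S] is determined by Dx, Dy and Dz, and differentiating
   the relation y^n1 = x^(n1-n0) z^n0 gives
     n1 y^(n1-1) Dy = n0 x^(n1-n0) z^(n0-1) Dz + (n1-n0) x^(n1-n0-1) z^n0 Dx.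
   Identifying monomials with their exponents: since gcd(n0, n1) = 1, every point of the lattice
   spanned by S can be written uniquely as r y + k z + i x with 0 <= r < n1, and it lies in S
   iff k, i >= 0. Comparing coefficients in the differentiated relation with this normal form
   shows that Dz lies in z k[S] + w k[S] and Dx in x k[S] + w k[S], where w = y^(n1-1).
   The two t-derivations of the generating set send z to n1 z and n1 w and kill x; the two
   u-derivations send x to n1 x and n1 w and kill z.
   Hence some k[S]-combination of them agrees with D on x and z, then on y by the relation, and
   so on all of k[S]. For minimality, each generator is detected by a single coefficient of its
   value on z or x that no k[S]-multiple of the values of the other generators reaches.
   The four cases of the theorem are this one statement with the exponents evaluated for
   n0 = 1 and/or n1 - n0 = 1. *)

section \<open>Coefficients and monomials of k[t,u]\<close>

(* Integer indices, with value 0 outside N^2, make division by a monomial a plain index shift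
   (tu_coeff_tu_monom_mult). *)
definition tu_coeff :: "'k::zero poly poly \<Rightarrow> int \<Rightarrow> int \<Rightarrow> 'k" where
  "tu_coeff p i j = (if 0 \<le> i \<and> 0 \<le> j then coeff (coeff p (nat j)) (nat i) else 0)"

lemma tu_coeff_int: "tu_coeff p (int i) (int j) = coeff (coeff p j) i"
  by (simp add: tu_coeff_def)

lemma tu_coeff_outside: "i < 0 \<or> j < 0 \<Longrightarrow> tu_coeff p i j = 0"
  by (auto simp: tu_coeff_def)

lemma tu_coeff_0 [simp]: "tu_coeff 0 i j = 0"
  by (simp add: tu_coeff_def)

lemma tu_coeff_add [simp]: "tu_coeff (p + q) i j = tu_coeff p i j + tu_coeff q i j"
  by (simp add: tu_coeff_def)

lemma tu_coeff_of_nat_mult [simp]: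
  "tu_coeff (of_nat n * p) i j = of_nat n * tu_coeff (p :: 'k::comm_semiring_1 poly poly) i j"
  by (simp add: tu_coeff_def of_nat_poly)

lemma tu_coeff_sum: "tu_coeff (\<Sum>x\<in>F. f x) i j = (\<Sum>x\<in>F. tu_coeff (f x) i j)"
  by (induction F rule: infinite_finite_induct) auto

lemma tu_coeff_tu_monom: "tu_coeff (tu_monom a b) i j = (if i = int a \<and> j = int b then 1 else 0)"
  by (auto simp: tu_coeff_def tu_monom_def coeff_monom)

lemma tu_coeff_tu_monom_mult:
  "tu_coeff (tu_monom a b * p) i j = tu_coeff p (i - int a) (j - int b)"
  by (auto simp: tu_coeff_def tu_monom_def coeff_monom_mult nat_diff_distrib)

lemma tu_coeff_mult_scaled_tu_monom:
  "tu_coeff (c * (of_nat n * tu_monom a b)) i j =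
    of_nat n * tu_coeff (c :: 'k::comm_semiring_1 poly poly) (i - int a) (j - int b)"
proof -
  have "c * (of_nat n * tu_monom a b) = of_nat n * (tu_monom a b * c)"
    by (simp add: ac_simps)
  then show ?thesis
    by (simp add: tu_coeff_tu_monom_mult)
qed

lemma tu_monom_mult: "tu_monom a b * tu_monom c d = tu_monom (a + c) (b + d)"
  by (simp add: tu_monom_def mult_monom)

lemma tu_monom_power: "tu_monom a b ^ n = tu_monom (n * a) (n * b)"
  by (simp add: tu_monom_def monom_power mult.commute)

lemma tu_monom_0_0: "tu_monom 0 0 = 1"
  by (simp add: tu_monom_def one_pCons monom_0)

lemma tu_monom_nonzero: "tu_monom a b \<noteq> (0 :: 'k::{comm_semiring_1,zero_neq_one} poly poly)"
  by (simp add: tu_monom_def)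

lemma tu_monom_eq_iff:
  "tu_monom a b = (tu_monom c d :: 'k::{comm_semiring_1,zero_neq_one} poly poly) \<longleftrightarrow> a = c \<and> b = d"
  by (metis one_neq_zero tu_coeff_tu_monom of_nat_eq_iff)

lemma smult_tu_monom: "monom (monom c i) j = smult [:c:] (tu_monom i j)"
  by (simp add: tu_monom_def smult_monom)

lemma smult_sum_right: "smult a (\<Sum>x\<in>F. f x) = (\<Sum>x\<in>F. smult a (f x))"
  by (induction F rule: infinite_finite_induct) (simp_all add: smult_add_right)

lemma smult_inverse_of_nat_cancel:
  assumes "n \<noteq> 0"
  shows "smult [:inverse (of_nat n):] p * (of_nat n * q) = p * (q :: 'k::field_char_0 poly poly)"
  using assms by (simp add: of_nat_poly flip: one_pCons)

lemma poly_poly_support_induct: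
  fixes p :: "'k::comm_semiring_1 poly poly"
  assumes "\<And>i j. coeff (coeff p j) i \<noteq> 0 \<Longrightarrow> C i j"
    and "P 0"
    and "\<And>q r. P q \<Longrightarrow> P r \<Longrightarrow> P (q + r)"
    and "\<And>c i j. c \<noteq> 0 \<Longrightarrow> C i j \<Longrightarrow> P (smult [:c:] (tu_monom i j))"
  shows "P p"
proof -
  have sum: "P (\<Sum>x\<in>F. f x)" if "\<And>x. x \<in> F \<Longrightarrow> P (f x)" for F and f :: "nat \<Rightarrow> 'k poly poly"
    using that by (induction F rule: infinite_finite_induct) (auto intro: assms(2,3))
  have "p = (\<Sum>j\<le>degree p. \<Sum>i\<le>degree (coeff p j). monom (monom (coeff (coeff p j) i) i) j)"
    by (simp add: poly_as_sum_of_monoms monom_sum[symmetric])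
  also have "P \<dots>"
    by (intro sum) (metis assms(1,2,4) smult_tu_monom monom_0 monom_eq_0)
  finally show ?thesis .
qed

section \<open>Partial derivatives\<close>

lemma map_poly_pderiv_tu_monom:
  "map_poly pderiv (tu_monom i j) = of_nat i * (tu_monom (i - 1) j :: 'k::field poly poly)"
  by (simp add: tu_monom_def map_poly_monom pderiv_monom of_nat_poly smult_monom)

lemma pderiv_tu_monom:
  "pderiv (tu_monom i j) = of_nat j * (tu_monom i (j - 1) :: 'k::field poly poly)"
  by (simp add: tu_monom_def pderiv_monom of_nat_poly smult_monom)

lemma map_poly_pderiv_add:
  "map_poly pderiv (p + q) = map_poly pderiv p + map_poly pderiv (q :: 'k::field poly poly)"
  by (rule poly_eqI) (simp add: coeff_map_poly pderiv_add)

lemma map_poly_pderiv_smult: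
  "map_poly pderiv (smult [:c:] p) = smult [:c:] (map_poly pderiv p :: 'k::field poly poly)"
  by (rule poly_eqI) (simp add: coeff_map_poly pderiv_smult)

lemma map_poly_pderiv_mult:
  "map_poly pderiv (p * q) = p * map_poly pderiv q + map_poly pderiv p * (q :: 'k::field poly poly)"
proof (rule poly_eqI)
  fix n
  have "coeff (map_poly pderiv (p * q)) n = (\<Sum>i\<le>n. pderiv (coeff p i * coeff q (n - i)))"
    by (simp add: coeff_map_poly coeff_mult higher_pderiv_sum[where n = 1, simplified])
  also have "\<dots> = (\<Sum>i\<le>n. coeff p i * pderiv (coeff q (n - i))) +
      (\<Sum>i\<le>n. pderiv (coeff p i) * coeff q (n - i))"
    by (simp add: pderiv_mult sum.distrib mult.commute)
  finally show "coeff (map_poly pderiv (p * q)) n =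
      coeff (p * map_poly pderiv q + map_poly pderiv p * q) n"
    by (simp add: coeff_mult coeff_map_poly)
qed

lemma dT_add: "dT a b (p + q) = dT a b p + dT a b (q :: 'k::field poly poly)"
  by (simp add: dT_def map_poly_pderiv_add distrib_left)

lemma dT_smult: "dT a b (smult [:c:] p) = smult [:c:] (dT a b (p :: 'k::field poly poly))"
  by (simp add: dT_def map_poly_pderiv_smult)

lemma dT_mult: "dT a b (p * q) = p * dT a b q + q * dT a b (p :: 'k::field poly poly)"
  by (simp add: dT_def map_poly_pderiv_mult algebra_simps)

lemma dU_add: "dU a b (p + q) = dU a b p + dU a b (q :: 'k::field poly poly)"
  by (simp add: dU_def pderiv_add distrib_left)

lemma dU_smult: "dU a b (smult [:c:] p) = smult [:c:] (dU a b (p :: 'k::field poly poly))"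
  by (simp add: dU_def pderiv_smult)

lemma dU_mult: "dU a b (p * q) = p * dU a b q + q * dU a b (p :: 'k::field poly poly)"
  by (simp add: dU_def pderiv_mult algebra_simps)

lemma dT_tu_monom:
  "dT a b (tu_monom i j) = of_nat i * (tu_monom (i + a - 1) (j + b) :: 'k::field poly poly)"
  by (cases i) (simp_all add: dT_def map_poly_pderiv_tu_monom tu_monom_mult ac_simps)

lemma dU_tu_monom:
  "dU a b (tu_monom i j) = of_nat j * (tu_monom (i + a) (j + b - 1) :: 'k::field poly poly)"
  by (cases j) (simp_all add: dU_def pderiv_tu_monom tu_monom_mult ac_simps)

lemma dT_ne_dU: "(dT a b :: 'k::field poly poly \<Rightarrow> _) \<noteq> dU c d"
proof
  assume "dT a b = (dU c d :: 'k poly poly \<Rightarrow> _)"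
  then have "dT a b (tu_monom 1 0) = (dU c d (tu_monom 1 0) :: 'k poly poly)"
    by simp
  then show False
    by (simp add: dT_tu_monom dU_tu_monom tu_monom_nonzero)
qed

lemma dT_eq_dT_iff: "(dT a b :: 'k::field poly poly \<Rightarrow> _) = dT c d \<longleftrightarrow> a = c \<and> b = d"
proof
  assume "dT a b = (dT c d :: 'k poly poly \<Rightarrow> _)"
  then have "dT a b (tu_monom 1 0) = (dT c d (tu_monom 1 0) :: 'k poly poly)"
    by simp
  then show "a = c \<and> b = d"
    by (simp add: dT_tu_monom tu_monom_eq_iff)
qed simp

lemma dU_eq_dU_iff: "(dU a b :: 'k::field poly poly \<Rightarrow> _) = dU c d \<longleftrightarrow> a = c \<and> b = d"
proof
  assume "dU a b = (dU c d :: 'k poly poly \<Rightarrow> _)"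
  then have "dU a b (tu_monom 0 1) = (dU c d (tu_monom 0 1) :: 'k poly poly)"
    by simp
  then show "a = c \<and> b = d"
    by (simp add: dU_tu_monom tu_monom_eq_iff)
qed simp

section \<open>Semigroup rings\<close>

lemma semigroup_ring_induct [consumes 1, case_names zero add monom]:
  fixes p :: "'k::comm_semiring_1 poly poly"
  assumes "p \<in> semigroup_ring S"
    and "P 0"
    and "\<And>q r. P q \<Longrightarrow> P r \<Longrightarrow> P (q + r)"
    and "\<And>c i j. (i, j) \<in> S \<Longrightarrow> P (smult [:c:] (tu_monom i j))"
  shows "P p"
proof (rule poly_poly_support_induct[where p = p and C = "\<lambda>i j. (i, j) \<in> S"])
  show "\<And>i j. coeff (coeff p j) i \<noteq> 0 \<Longrightarrow> (i, j) \<in> S"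
    using assms(1) by (simp add: semigroup_ring_def)
qed (fact assms(2), fact assms(3), rule assms(4))

definition lattice_mem :: "(nat \<times> nat) set \<Rightarrow> int \<Rightarrow> int \<Rightarrow> bool" where
  "lattice_mem S i j \<longleftrightarrow> 0 \<le> i \<and> 0 \<le> j \<and> (nat i, nat j) \<in> S"

lemma lattice_mem_int [simp]: "lattice_mem S (int i) (int j) \<longleftrightarrow> (i, j) \<in> S"
  by (simp add: lattice_mem_def)

lemma lattice_mem_diff_iff:
  "lattice_mem S (int i - int a) (int j - int b) \<longleftrightarrow> a \<le> i \<and> b \<le> j \<and> (i - a, j - b) \<in> S"
  by (auto simp: lattice_mem_def nat_diff_distrib)

lemma semigroup_ring_iff_tu_coeff:
  "p \<in> semigroup_ring S \<longleftrightarrow> (\<forall>i j. tu_coeff p i j \<noteq> 0 \<longrightarrow> lattice_mem S i j)"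
proof
  assume "p \<in> semigroup_ring S"
  then show "\<forall>i j. tu_coeff p i j \<noteq> 0 \<longrightarrow> lattice_mem S i j"
    by (auto simp: semigroup_ring_def tu_coeff_def lattice_mem_def)
next
  assume R: "\<forall>i j. tu_coeff p i j \<noteq> 0 \<longrightarrow> lattice_mem S i j"
  show "p \<in> semigroup_ring S"
    unfolding semigroup_ring_def
  proof (intro CollectI allI impI)
    fix i j
    assume "coeff (coeff p j) i \<noteq> 0"
    then show "(i, j) \<in> S"
      using R[rule_format, of "int i" "int j"] by (simp add: tu_coeff_int)
  qed
qed

lemma tu_coeff_eq_0_if_not_lattice_mem:
  "p \<in> semigroup_ring S \<Longrightarrow> \<not> lattice_mem S i j \<Longrightarrow> tu_coeff p i j = 0"
  using semigroup_ring_iff_tu_coeff by blast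

lemma zero_in_semigroup_ring: "0 \<in> semigroup_ring S"
  by (simp add: semigroup_ring_def)

lemma add_in_semigroup_ring:
  assumes "p \<in> semigroup_ring S" "q \<in> semigroup_ring S"
  shows "p + q \<in> semigroup_ring S"
  unfolding semigroup_ring_def
proof (intro CollectI allI impI)
  fix i j
  assume "coeff (coeff (p + q) j) i \<noteq> 0"
  then have "coeff (coeff p j) i \<noteq> 0 \<or> coeff (coeff q j) i \<noteq> 0"
    by auto
  then show "(i, j) \<in> S"
    using assms by (auto simp: semigroup_ring_def)
qed

lemma smult_in_semigroup_ring:
  assumes "p \<in> semigroup_ring S"
  shows "smult [:c:] p \<in> semigroup_ring S"
  unfolding semigroup_ring_def
proof (intro CollectI allI impI)
  fix i j
  assume "coeff (coeff (smult [:c:] p) j) i \<noteq> 0"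
  then have "coeff (coeff p j) i \<noteq> 0"
    by auto
  then show "(i, j) \<in> S"
    using assms by (simp add: semigroup_ring_def)
qed

lemma of_nat_mult_in_semigroup_ring:
  "p \<in> semigroup_ring S \<Longrightarrow> of_nat n * p \<in> semigroup_ring S"
  by (simp add: of_nat_poly smult_in_semigroup_ring)

lemma tu_monom_in_semigroup_ring: "(i, j) \<in> S \<Longrightarrow> tu_monom i j \<in> semigroup_ring S"
  by (simp add: semigroup_ring_def tu_monom_def coeff_monom)

lemma mult_in_semigroup_ring:
  assumes S: "\<And>a b c d. (a, b) \<in> S \<Longrightarrow> (c, d) \<in> S \<Longrightarrow> (a + c, b + d) \<in> S"
    and p: "p \<in> semigroup_ring S" and q: "q \<in> semigroup_ring S"
  shows "p * q \<in> semigroup_ring S"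
  unfolding semigroup_ring_def
proof (intro CollectI allI impI)
  fix i j
  assume "coeff (coeff (p * q) j) i \<noteq> 0"
  then have "(\<Sum>l\<le>j. coeff (coeff p l * coeff q (j - l)) i) \<noteq> 0"
    by (simp add: coeff_mult coeff_sum)
  then obtain l where l: "l \<le> j" "coeff (coeff p l * coeff q (j - l)) i \<noteq> 0"
    by (rule sum.not_neutral_contains_not_neutral) simp
  then have "(\<Sum>m\<le>i. coeff (coeff p l) m * coeff (coeff q (j - l)) (i - m)) \<noteq> 0"
    by (simp add: coeff_mult)
  then obtain m where m: "m \<le> i" "coeff (coeff p l) m * coeff (coeff q (j - l)) (i - m) \<noteq> 0"
    by (rule sum.not_neutral_contains_not_neutral) simp
  then have "coeff (coeff p l) m \<noteq> 0" "coeff (coeff q (j - l)) (i - m) \<noteq> 0"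
    by auto
  then have "(m, l) \<in> S" "(i - m, j - l) \<in> S"
    using p q by (simp_all add: semigroup_ring_def)
  from S[OF this] show "(i, j) \<in> S"
    using l(1) m(1) by simp
qed

lemma semigroup_ring_linear_image:
  fixes L :: "'k::comm_semiring_1 poly poly \<Rightarrow> 'k poly poly"
  assumes L_add: "\<And>p q. L (p + q) = L p + L q"
    and L_smult: "\<And>c p. L (smult [:c:] p) = smult [:c:] (L p)"
    and L_monom: "\<And>i j. (i, j) \<in> S \<Longrightarrow> L (tu_monom i j) \<in> semigroup_ring S"
    and p: "p \<in> semigroup_ring S"
  shows "L p \<in> semigroup_ring S"
  using p
proof (induction p rule: semigroup_ring_induct)
  case zero
  show ?case
    using L_smult[of 0 0] by (simp add: zero_in_semigroup_ring)
next
  case (add q r)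
  then show ?case
    by (simp add: L_add add_in_semigroup_ring)
next
  case (monom c i j)
  then show ?case
    by (simp add: L_smult L_monom smult_in_semigroup_ring)
qed

definition subsemiring :: "'a::semiring_1 set \<Rightarrow> bool" where
  "subsemiring A \<longleftrightarrow> 0 \<in> A \<and> 1 \<in> A \<and> (\<forall>p\<in>A. \<forall>q\<in>A. p + q \<in> A \<and> p * q \<in> A)"

lemma subsemiring_semigroup_ring:
  assumes "(0, 0) \<in> S" and "\<And>a b c d. (a, b) \<in> S \<Longrightarrow> (c, d) \<in> S \<Longrightarrow> (a + c, b + d) \<in> S"
  shows "subsemiring (semigroup_ring S :: 'k::comm_semiring_1 poly poly set)"
  using tu_monom_in_semigroup_ring[OF assms(1), where 'a = 'k]
  by (simp add: subsemiring_def tu_monom_0_0 zero_in_semigroup_ring add_in_semigroup_ring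
      mult_in_semigroup_ring[OF assms(2)])

lemma subsemiring_sum:
  "subsemiring A \<Longrightarrow> (\<And>x. x \<in> F \<Longrightarrow> f x \<in> A) \<Longrightarrow> (\<Sum>x\<in>F. f x) \<in> A"
  by (induction F rule: infinite_finite_induct) (auto simp: subsemiring_def)

lemma subsemiring_power: "subsemiring A \<Longrightarrow> p \<in> A \<Longrightarrow> p ^ n \<in> A"
  by (induction n) (auto simp: subsemiring_def)

lemma smult_tu_monom_divisible:
  assumes "lattice_mem S (int i - int a) (int j - int b)"
  shows "\<exists>m\<in>semigroup_ring S. smult [:c:] (tu_monom i j) = tu_monom a b * m"
proof
  from assms have "a \<le> i" "b \<le> j" "(i - a, j - b) \<in> S"
    by (simp_all add: lattice_mem_diff_iff)
  then show "smult [:c:] (tu_monom i j) = tu_monom a b * smult [:c:] (tu_monom (i - a) (j - b))"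
    by (simp add: tu_monom_mult)
  show "smult [:c:] (tu_monom (i - a) (j - b)) \<in> semigroup_ring S"
    using \<open>(i - a, j - b) \<in> S\<close> by (intro smult_in_semigroup_ring tu_monom_in_semigroup_ring)
qed

lemma semigroup_ring_split:
  fixes p :: "'k::comm_semiring_1 poly poly"
  assumes "\<And>i j. tu_coeff p i j \<noteq> 0 \<Longrightarrow>
      lattice_mem S (i - int a) (j - int b) \<or> lattice_mem S (i - int a') (j - int b')"
  shows "\<exists>p1\<in>semigroup_ring S. \<exists>p2\<in>semigroup_ring S. p = tu_monom a b * p1 + tu_monom a' b' * p2"
    (is "?P p")
proof (rule poly_poly_support_induct[where p = p and
      C = "\<lambda>i j. lattice_mem S (int i - int a) (int j - int b) \<or>
        lattice_mem S (int i - int a') (int j - int b')"])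
  show "lattice_mem S (int i - int a) (int j - int b) \<or> lattice_mem S (int i - int a') (int j - int b')"
    if "coeff (coeff p j) i \<noteq> 0" for i j
    using assms[of "int i" "int j"] that by (simp add: tu_coeff_int)
  show "?P 0"
    by (intro bexI[of _ 0]) (simp_all add: zero_in_semigroup_ring)
next
  fix q r :: "'k poly poly"
  assume "?P q" "?P r"
  then obtain q1 q2 r1 r2 where "q1 \<in> semigroup_ring S" "q2 \<in> semigroup_ring S"
    "r1 \<in> semigroup_ring S" "r2 \<in> semigroup_ring S"
    "q + r = tu_monom a b * (q1 + r1) + tu_monom a' b' * (q2 + r2)"
    by (auto simp: algebra_simps)
  then show "?P (q + r)"
    using add_in_semigroup_ring by blast
next
  fix c :: 'k and i j
  assume "lattice_mem S (int i - int a) (int j - int b) \<or> lattice_mem S (int i - int a') (int j - int b')"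
  then obtain m1 m2 where "m1 \<in> semigroup_ring S" "m2 \<in> semigroup_ring S"
    "smult [:c:] (tu_monom i j) = tu_monom a b * m1 + tu_monom a' b' * m2"
    using smult_tu_monom_divisible[of S i a j b c] smult_tu_monom_divisible[of S i a' j b' c]
      zero_in_semigroup_ring[of S]
    by (metis add.right_neutral add_0 mult_zero_right)
  then show "?P (smult [:c:] (tu_monom i j))"
    by blast
qed

section \<open>Derivations of a subsemiring of k[t,u]\<close>

lemma derivation_mem: "is_derivation A D \<Longrightarrow> p \<in> A \<Longrightarrow> D p \<in> A"
  by (simp add: is_derivation_def)

lemma derivation_add:
  "is_derivation A D \<Longrightarrow> p \<in> A \<Longrightarrow> q \<in> A \<Longrightarrow> D (p + q) = D p + D q"
  by (simp add: is_derivation_def)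

lemma derivation_smult:
  "is_derivation A D \<Longrightarrow> p \<in> A \<Longrightarrow> D (smult [:c:] p) = smult [:c:] (D p)"
  by (simp add: is_derivation_def)

lemma derivation_mult:
  "is_derivation A D \<Longrightarrow> p \<in> A \<Longrightarrow> q \<in> A \<Longrightarrow> D (p * q) = p * D q + q * D p"
  by (simp add: is_derivation_def)

lemma derivation_zero: "is_derivation A D \<Longrightarrow> 0 \<in> A \<Longrightarrow> D 0 = 0"
  unfolding is_derivation_def by (metis add_0 add_cancel_right_right)

lemma derivation_one: "is_derivation A D \<Longrightarrow> 1 \<in> A \<Longrightarrow> D 1 = 0"
  unfolding is_derivation_def by (metis add_cancel_right_right mult_1 mult_1_right)

lemma derivation_power:
  assumes D: "is_derivation A D" and A: "subsemiring A" and p: "p \<in> A"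
  shows "D (p ^ n) = of_nat n * p ^ (n - 1) * D p"
proof (induction n)
  case 0
  show ?case
    using derivation_one[OF D] A by (simp add: subsemiring_def)
next
  case (Suc n)
  have "D (p ^ Suc n) = p * D (p ^ n) + p ^ n * D p"
    using derivation_mult[OF D p subsemiring_power[OF A p]] by simp
  also have "\<dots> = of_nat (Suc n) * p ^ n * D p"
    using Suc by (cases n) (simp_all add: algebra_simps)
  finally show ?case
    by simp
qed

lemma derivations_agree_mult:
  assumes "is_derivation A D" "is_derivation A D'" "p \<in> A" "q \<in> A" "D p = D' p" "D q = D' q"
  shows "D (p * q) = D' (p * q)"
  using assms by (simp add: derivation_mult)

lemma derivations_agree_power:
  assumes "is_derivation A D" "is_derivation A D'" "subsemiring A" "p \<in> A" "D p = D' p"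
  shows "D (p ^ n) = D' (p ^ n)"
  using assms by (simp add: derivation_power)

lemma derivations_agree_on_monomials:
  assumes D: "is_derivation A D" and D': "is_derivation A D'" and A: "subsemiring A"
    and "x \<in> A" "y \<in> A" "z \<in> A" "D x = D' x" "D y = D' y" "D z = D' z"
  shows "D (x ^ a * y ^ b * z ^ c) = D' (x ^ a * y ^ b * z ^ c)"
proof -
  have "x ^ a \<in> A" "y ^ b \<in> A" "z ^ c \<in> A"
    using assms(4-6) by (simp_all add: subsemiring_power[OF A])
  moreover have "D (x ^ a) = D' (x ^ a)" "D (y ^ b) = D' (y ^ b)" "D (z ^ c) = D' (z ^ c)"
    using assms(4-9) by (simp_all add: derivations_agree_power[OF D D' A])
  ultimately show ?thesis
    using A by (simp add: derivations_agree_mult[OF D D'] subsemiring_def)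
qed

lemma is_derivation_linear_combination:
  assumes A: "subsemiring A" and G: "\<And>g. g \<in> G \<Longrightarrow> is_derivation A g \<and> c g \<in> A"
  shows "is_derivation A (\<lambda>p. \<Sum>g\<in>G. c g * g p)"
  unfolding is_derivation_def
proof (intro conjI ballI allI)
  fix p q a
  assume p: "p \<in> A" and q: "q \<in> A"
  show "(\<Sum>g\<in>G. c g * g p) \<in> A"
    using A p G by (intro subsemiring_sum) (auto simp: subsemiring_def is_derivation_def)
  have "c g * g (p + q) = c g * g p + c g * g q"
    and "c g * g (smult [:a:] p) = smult [:a:] (c g * g p)"
    and "c g * g (p * q) = p * (c g * g q) + q * (c g * g p)" if "g \<in> G" for g
    using p q G[OF that] by (simp_all add: is_derivation_def algebra_simps)
  then show "(\<Sum>g\<in>G. c g * g (p + q)) = (\<Sum>g\<in>G. c g * g p) + (\<Sum>g\<in>G. c g * g q)"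
    and "(\<Sum>g\<in>G. c g * g (smult [:a:] p)) = smult [:a:] (\<Sum>g\<in>G. c g * g p)"
    and "(\<Sum>g\<in>G. c g * g (p * q)) = p * (\<Sum>g\<in>G. c g * g q) + q * (\<Sum>g\<in>G. c g * g p)"
    by (simp_all add: sum.distrib sum_distrib_left smult_sum_right)
qed

lemma is_derivation_dT:
  assumes S: "\<And>i j. (i, j) \<in> S \<Longrightarrow> 0 < i \<Longrightarrow> (i + a - 1, j + b) \<in> S"
  shows "is_derivation (semigroup_ring S) (dT a b :: 'k::field poly poly \<Rightarrow> _)"
  unfolding is_derivation_def
proof (intro conjI ballI allI dT_add dT_smult dT_mult)
  fix p :: "'k poly poly"
  assume "p \<in> semigroup_ring S"
  then show "dT a b p \<in> semigroup_ring S"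
  proof (rule semigroup_ring_linear_image[OF dT_add dT_smult, rotated])
    fix i j
    assume "(i, j) \<in> S"
    with S show "dT a b (tu_monom i j) \<in> semigroup_ring S"
      by (cases "i = 0") (simp_all add: dT_tu_monom zero_in_semigroup_ring
          tu_monom_in_semigroup_ring of_nat_mult_in_semigroup_ring)
  qed
qed

lemma is_derivation_dU:
  assumes S: "\<And>i j. (i, j) \<in> S \<Longrightarrow> 0 < j \<Longrightarrow> (i + a, j + b - 1) \<in> S"
  shows "is_derivation (semigroup_ring S) (dU a b :: 'k::field poly poly \<Rightarrow> _)"
  unfolding is_derivation_def
proof (intro conjI ballI allI dU_add dU_smult dU_mult)
  fix p :: "'k poly poly"
  assume "p \<in> semigroup_ring S"
  then show "dU a b p \<in> semigroup_ring S"
  proof (rule semigroup_ring_linear_image[OF dU_add dU_smult, rotated])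
    fix i j
    assume "(i, j) \<in> S"
    with S show "dU a b (tu_monom i j) \<in> semigroup_ring S"
      by (cases "j = 0") (simp_all add: dU_tu_monom zero_in_semigroup_ring
          tu_monom_in_semigroup_ring of_nat_mult_in_semigroup_ring)
  qed
qed

lemma in_span_mono: "in_span A H D \<Longrightarrow> H \<subseteq> H' \<Longrightarrow> in_span A H' D"
  unfolding in_span_def by (meson order_trans)

lemma minimally_generates_DerI:
  assumes "\<forall>g\<in>G. is_derivation A g" and "generates_Der A G"
    and "\<And>g. g \<in> G \<Longrightarrow> \<not> in_span A (G - {g}) g"
  shows "minimally_generates_Der A G"
  unfolding minimally_generates_Der_def
proof (intro conjI allI impI)
  show "\<forall>g\<in>G. is_derivation A g" and "generates_Der A G"
    by (fact assms(1), fact assms(2))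
  fix H
  assume "H \<subset> G"
  then obtain g where g: "g \<in> G" "g \<notin> H"
    by blast
  show "\<not> generates_Der A H"
  proof
    assume "generates_Der A H"
    then have "in_span A H g"
      using assms(1) g(1) by (simp add: generates_Der_def)
    moreover have "H \<subseteq> G - {g}"
      using \<open>H \<subset> G\<close> g(2) by blast
    ultimately have "in_span A (G - {g}) g"
      by (rule in_span_mono)
    with assms(3) g(1) show False
      by blast
  qed
qed

lemma not_in_span_by_tu_coeff:
  assumes "p \<in> A" and "tu_coeff (D p) i j \<noteq> 0"
    and "\<And>h c. h \<in> H \<Longrightarrow> c \<in> A \<Longrightarrow> tu_coeff (c * h p) i j = 0"
  shows "\<not> in_span A H D"
proof
  assume "in_span A H D"
  then obtain F c where F: "F \<subseteq> H" "\<forall>h\<in>F. c h \<in> A" and D: "D p = (\<Sum>h\<in>F. c h * h p)"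
    using assms(1) unfolding in_span_def by blast
  have "tu_coeff (D p) i j = (\<Sum>h\<in>F. tu_coeff (c h * h p) i j)"
    by (simp add: D tu_coeff_sum)
  also have "\<dots> = 0"
    using F assms(3) by (intro sum.neutral) blast
  finally show False
    using assms(2) by contradiction
qed

section \<open>The semigroup S\<close>

lemma zero_in_semigroupS: "(0, 0) \<in> semigroupS n0 n1"
  unfolding semigroupS_def by force

lemma add_in_semigroupS:
  assumes "(a, b) \<in> semigroupS n0 n1" "(c, d) \<in> semigroupS n0 n1"
  shows "(a + c, b + d) \<in> semigroupS n0 n1"
proof -
  obtain x y z x' y' z' where "a = x * 0 + y * n0 + z * n1" "b = x * n1 + y * (n1 - n0) + z * 0"
    "c = x' * 0 + y' * n0 + z' * n1" "d = x' * n1 + y' * (n1 - n0) + z' * 0"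
    using assms unfolding semigroupS_def by blast
  then show ?thesis
    unfolding semigroupS_def by (intro CollectI exI[of _ "x + x'"] exI[of _ "y + y'"] exI[of _ "z + z'"])
      (simp add: algebra_simps)
qed

lemma subsemiring_semigroupS: "subsemiring (semigroup_ring (semigroupS n0 n1))"
  by (intro subsemiring_semigroup_ring zero_in_semigroupS add_in_semigroupS)

locale coprime_pair =
  fixes n0 n1 :: nat
  assumes n0_pos: "0 < n0" and n0_less_n1: "n0 < n1" and coprime: "coprime n0 n1"
begin

abbreviation inS :: "int \<Rightarrow> int \<Rightarrow> bool" where
  "inS \<equiv> lattice_mem (semigroupS n0 n1)"

lemma int_n1_minus_n0 [simp]: "int (n1 - n0) = int n1 - int n0"
  using n0_less_n1 by simp

(* r, k, i count the generators y = (n0, n1 - n0), z = (n1, 0) and x = (0, n1) of S. *)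
lemma inS_iff:
  "inS a b \<longleftrightarrow> (\<exists>r k i. 0 \<le> r \<and> 0 \<le> k \<and> 0 \<le> i \<and>
     a = r * int n0 + k * int n1 \<and> b = r * (int n1 - int n0) + i * int n1)"
proof
  assume "inS a b"
  then obtain x y z where "0 \<le> a" "0 \<le> b" "nat a = y * n0 + z * n1" "nat b = x * n1 + y * (n1 - n0)"
    by (auto simp: lattice_mem_def semigroupS_def)
  then have ab: "a = int y * int n0 + int z * int n1" "b = int y * (int n1 - int n0) + int x * int n1"
    by (simp_all add: nat_eq_iff mult.commute)
  show "\<exists>r k i. 0 \<le> r \<and> 0 \<le> k \<and> 0 \<le> i \<and>
     a = r * int n0 + k * int n1 \<and> b = r * (int n1 - int n0) + i * int n1"
    by (rule exI[of _ "int y"], rule exI[of _ "int z"], rule exI[of _ "int x"]) (simp add: ab)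
next
  assume "\<exists>r k i. 0 \<le> r \<and> 0 \<le> k \<and> 0 \<le> i \<and>
     a = r * int n0 + k * int n1 \<and> b = r * (int n1 - int n0) + i * int n1"
  then obtain r k i where "0 \<le> r" "0 \<le> k" "0 \<le> i"
    "a = r * int n0 + k * int n1" "b = r * (int n1 - int n0) + i * int n1"
    by blast
  then have ab: "a = int (nat r * n0 + nat k * n1)" "b = int (nat i * n1 + nat r * (n1 - n0))"
    by simp_all
  have "(nat a, nat b) = (nat i * 0 + nat r * n0 + nat k * n1, nat i * n1 + nat r * (n1 - n0) + nat k * 0)"
    by (simp only: ab nat_int) simp
  then have "(nat a, nat b) \<in> semigroupS n0 n1"
    unfolding semigroupS_def by blast
  moreover have "0 \<le> a" "0 \<le> b"
    by (simp_all only: ab of_nat_0_le_iff)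
  ultimately show "inS a b"
    by (simp add: lattice_mem_def)
qed

lemma inS_intro:
  "0 \<le> r \<Longrightarrow> 0 \<le> k \<Longrightarrow> 0 \<le> i \<Longrightarrow> a = r * int n0 + k * int n1 \<Longrightarrow>
    b = r * (int n1 - int n0) + i * int n1 \<Longrightarrow> inS a b"
  using inS_iff by blast

lemma inS_normal_form:
  assumes "inS a b"
  obtains r k i where "0 \<le> r" "r < int n1" "0 \<le> k" "0 \<le> i"
    "a = r * int n0 + k * int n1" "b = r * (int n1 - int n0) + i * int n1"
proof -
  obtain y k i where nonneg: "0 \<le> y" "0 \<le> k" "0 \<le> i"
    and ab: "a = y * int n0 + k * int n1" "b = y * (int n1 - int n0) + i * int n1"
    using assms inS_iff by blast
  define r where "r = y mod int n1"
  define q where "q = y div int n1"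
  have y: "y = r + q * int n1"
    by (simp add: r_def q_def)
  have "0 \<le> r" "r < int n1" "0 \<le> q"
    using nonneg(1) n0_less_n1 by (simp_all add: r_def q_def pos_imp_zdiv_nonneg_iff)
  moreover have "0 \<le> k + q * int n0" "0 \<le> i + q * (int n1 - int n0)"
    using nonneg \<open>0 \<le> q\<close> n0_less_n1 by simp_all
  moreover have "a = r * int n0 + (k + q * int n0) * int n1"
    "b = r * (int n1 - int n0) + (i + q * (int n1 - int n0)) * int n1"
    using ab y by (simp_all add: algebra_simps)
  ultimately show thesis
    using that by blast
qed

lemma inS_normal_iff:
  assumes r: "0 \<le> r" "r < int n1"
    and ab: "a = r * int n0 + k * int n1" "b = r * (int n1 - int n0) + i * int n1"
  shows "inS a b \<longleftrightarrow> 0 \<le> k \<and> 0 \<le> i"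
proof
  assume "inS a b"
  then obtain r' k' i' where nonneg: "0 \<le> r'" "0 \<le> k'" "0 \<le> i'"
    and ab': "a = r' * int n0 + k' * int n1" "b = r' * (int n1 - int n0) + i' * int n1"
    using inS_iff by blast
  have eq: "(r' - r) * int n0 = (k - k') * int n1"
    using ab ab' by (simp add: algebra_simps)
  have "coprime (int n1) (int n0)"
    using coprime by (simp add: coprime_commute)
  moreover have "int n1 dvd (r' - r) * int n0"
    unfolding eq by simp
  ultimately have "int n1 dvd r' - r"
    by (simp add: coprime_dvd_mult_left_iff)
  then obtain t where t: "r' - r = int n1 * t"
    by (rule dvdE)
  have "0 \<le> t"
  proof (rule ccontr)
    assume "\<not> 0 \<le> t"
    then have "int n1 * t \<le> int n1 * (- 1)"
      by (intro mult_left_mono) simp_all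
    with t r nonneg(1) show False
      by linarith
  qed
  have n1: "int n1 \<noteq> 0"
    using n0_less_n1 by simp
  have "(k - k') * int n1 = (t * int n0) * int n1"
    using eq t by (simp add: algebra_simps)
  moreover have "(i - i') * int n1 = (t * (int n1 - int n0)) * int n1"
    using ab ab' t by (simp add: algebra_simps)
  ultimately have "k = k' + t * int n0" "i = i' + t * (int n1 - int n0)"
    using n1 by simp_all
  then show "0 \<le> k \<and> 0 \<le> i"
    using nonneg \<open>0 \<le> t\<close> n0_less_n1 by simp
next
  assume "0 \<le> k \<and> 0 \<le> i"
  then show "inS a b"
    using inS_intro r(1) ab by blast
qed

(* (wt, wu) is the exponent of y^(n1-1). *)
definition wt :: nat where
  "wt = n0 * (n1 - 1)"

definition wu :: nat where
  "wu = (n1 - 1) * (n1 - n0)"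

lemma int_wt: "int wt = int n0 * (int n1 - 1)"
  using n0_less_n1 by (simp add: wt_def of_nat_diff)

lemma int_wu: "int wu = (int n1 - 1) * (int n1 - int n0)"
  using n0_less_n1 by (simp add: wu_def of_nat_diff)

lemma wt_pos: "0 < wt"
  using n0_pos n0_less_n1 by (simp add: wt_def)

lemma wu_pos: "0 < wu"
  using n0_less_n1 n0_pos by (simp add: wu_def)

lemma n1_le_wt: "n1 \<le> wt + 1"
proof -
  have "1 * (n1 - 1) \<le> n0 * (n1 - 1)"
    using n0_pos by (intro mult_le_mono1) simp
  then show ?thesis
    unfolding wt_def by linarith
qed

lemma n1_le_wu: "n1 \<le> wu + 1"
proof -
  have "(n1 - 1) * 1 \<le> (n1 - 1) * (n1 - n0)"
    using n0_less_n1 by (intro mult_le_mono2) simp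
  then show ?thesis
    unfolding wu_def by linarith
qed

lemma inS_shift_t:
  assumes "inS a b" "a \<noteq> 0"
  shows "inS (a + int wt - int n1) (b + int wu)"
proof -
  obtain r k i where nf: "0 \<le> r" "r < int n1" "0 \<le> k" "0 \<le> i"
    "a = r * int n0 + k * int n1" "b = r * (int n1 - int n0) + i * int n1"
    using assms(1) by (rule inS_normal_form)
  show ?thesis
  proof (cases "k = 0")
    case True
    with nf assms(2) have "1 \<le> r"
      by simp
    show ?thesis
      by (rule inS_intro[of "r - 1" "int n0 - 1" "i + int n1 - int n0"])
        (use \<open>1 \<le> r\<close> nf True n0_pos n0_less_n1 in
          \<open>simp_all add: int_wt int_wu algebra_simps\<close>)
  next
    case False
    show ?thesis
      by (rule inS_intro[of "r + int n1 - 1" "k - 1" i])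
        (use False nf n0_less_n1 in \<open>simp_all add: int_wt int_wu algebra_simps\<close>)
  qed
qed

lemma inS_shift_u:
  assumes "inS a b" "b \<noteq> 0"
  shows "inS (a + int wt) (b + int wu - int n1)"
proof -
  obtain r k i where nf: "0 \<le> r" "r < int n1" "0 \<le> k" "0 \<le> i"
    "a = r * int n0 + k * int n1" "b = r * (int n1 - int n0) + i * int n1"
    using assms(1) by (rule inS_normal_form)
  show ?thesis
  proof (cases "i = 0")
    case True
    with nf assms(2) have "1 \<le> r"
      by simp
    show ?thesis
      by (rule inS_intro[of "r - 1" "k + int n0" "int n1 - int n0 - 1"])
        (use \<open>1 \<le> r\<close> nf True n0_pos n0_less_n1 in
          \<open>simp_all add: int_wt int_wu algebra_simps\<close>)
  next
    case False
    show ?thesis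
      by (rule inS_intro[of "r + int n1 - 1" k "i - 1"])
        (use False nf n0_less_n1 in \<open>simp_all add: int_wt int_wu algebra_simps\<close>)
  qed
qed

lemma w_sub_z_notin_S: "\<not> inS (int wt - int n1) (int wu)"
  using inS_normal_iff[of "int n1 - 1" "int wt - int n1" "- 1" "int wu" 0] n0_less_n1
  by (simp add: int_wt int_wu algebra_simps)

lemma w_sub_x_notin_S: "\<not> inS (int wt) (int wu - int n1)"
  using inS_normal_iff[of "int n1 - 1" "int wt" 0 "int wu - int n1" "- 1"] n0_less_n1
  by (simp add: int_wt int_wu algebra_simps)

lemma notin_S_relation_partners_z:
  assumes "inS a b" "\<not> inS (a - int n1) b" "\<not> inS (a - int wt) (b - int wu)"
  shows "\<not> inS (a - int n1 + int n0) (b + int n1 - int n0)" "\<not> inS (a - int n1) (b + int n1)"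
proof -
  obtain r k i where nf: "0 \<le> r" "r < int n1" "0 \<le> k" "0 \<le> i"
    "a = r * int n0 + k * int n1" "b = r * (int n1 - int n0) + i * int n1"
    using assms(1) by (rule inS_normal_form)
  have "inS (a - int n1) b \<longleftrightarrow> 0 \<le> k - 1 \<and> 0 \<le> i"
    by (rule inS_normal_iff[of r]) (use nf in \<open>simp_all add: algebra_simps\<close>)
  with assms(2) nf have k: "k = 0"
    by simp
  have "r \<noteq> int n1 - 1"
  proof
    assume r: "r = int n1 - 1"
    have "inS (a - int wt) (b - int wu)"
      by (rule inS_intro[of 0 k i]) (use nf in \<open>simp_all add: r int_wt int_wu algebra_simps\<close>)
    with assms(3) show False
      by contradiction
  qed
  then have "r + 1 < int n1"
    using nf by simp
  have "inS (a - int n1 + int n0) (b + int n1 - int n0) \<longleftrightarrow> 0 \<le> k - 1 \<and> 0 \<le> i"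
    by (rule inS_normal_iff[of "r + 1"])
      (use nf \<open>r + 1 < int n1\<close> in \<open>simp_all add: algebra_simps\<close>)
  then show "\<not> inS (a - int n1 + int n0) (b + int n1 - int n0)"
    using k by simp
  have "inS (a - int n1) (b + int n1) \<longleftrightarrow> 0 \<le> k - 1 \<and> 0 \<le> i + 1"
    by (rule inS_normal_iff[of r]) (use nf in \<open>simp_all add: algebra_simps\<close>)
  then show "\<not> inS (a - int n1) (b + int n1)"
    using k by simp
qed

lemma notin_S_relation_partners_x:
  assumes "inS a b" "\<not> inS a (b - int n1)" "\<not> inS (a - int wt) (b - int wu)"
  shows "\<not> inS (a + int n0) (b - int n0)" "\<not> inS (a + int n1) (b - int n1)"
proof -
  obtain r k i where nf: "0 \<le> r" "r < int n1" "0 \<le> k" "0 \<le> i"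
    "a = r * int n0 + k * int n1" "b = r * (int n1 - int n0) + i * int n1"
    using assms(1) by (rule inS_normal_form)
  have "inS a (b - int n1) \<longleftrightarrow> 0 \<le> k \<and> 0 \<le> i - 1"
    by (rule inS_normal_iff[of r]) (use nf in \<open>simp_all add: algebra_simps\<close>)
  with assms(2) nf have i: "i = 0"
    by simp
  have "r \<noteq> int n1 - 1"
  proof
    assume r: "r = int n1 - 1"
    have "inS (a - int wt) (b - int wu)"
      by (rule inS_intro[of 0 k i]) (use nf in \<open>simp_all add: r int_wt int_wu algebra_simps\<close>)
    with assms(3) show False
      by contradiction
  qed
  then have "r + 1 < int n1"
    using nf by simp
  have "inS (a + int n0) (b - int n0) \<longleftrightarrow> 0 \<le> k \<and> 0 \<le> i - 1"
    by (rule inS_normal_iff[of "r + 1"])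
      (use nf \<open>r + 1 < int n1\<close> in \<open>simp_all add: algebra_simps\<close>)
  then show "\<not> inS (a + int n0) (b - int n0)"
    using i by simp
  have "inS (a + int n1) (b - int n1) \<longleftrightarrow> 0 \<le> k + 1 \<and> 0 \<le> i - 1"
    by (rule inS_normal_iff[of r]) (use nf in \<open>simp_all add: algebra_simps\<close>)
  then show "\<not> inS (a + int n1) (b - int n1)"
    using i by simp
qed

section \<open>Derivations of k[S]\<close>

abbreviation kS :: "'k::field poly poly set" where
  "kS \<equiv> semigroup_ring (semigroupS n0 n1)"

abbreviation gx :: "'k::comm_semiring_1 poly poly" where
  "gx \<equiv> tu_monom 0 n1"

abbreviation gy :: "'k::comm_semiring_1 poly poly" where
  "gy \<equiv> tu_monom n0 (n1 - n0)"

abbreviation gz :: "'k::comm_semiring_1 poly poly" where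
  "gz \<equiv> tu_monom n1 0"

lemma tu_monom_in_kS: "inS (int i) (int j) \<Longrightarrow> tu_monom i j \<in> kS"
  by (simp add: tu_monom_in_semigroup_ring)

lemma generators_in_kS: "gx \<in> kS" "gy \<in> kS" "gz \<in> kS"
proof -
  show "gx \<in> kS"
    by (rule tu_monom_in_kS, rule inS_intro[of 0 0 1]) simp_all
  show "gy \<in> kS"
    by (rule tu_monom_in_kS, rule inS_intro[of 1 0 0]) simp_all
  show "gz \<in> kS"
    by (rule tu_monom_in_kS, rule inS_intro[of 0 1 0]) simp_all
qed

lemma generators_relation: "gy ^ n1 = gx ^ (n1 - n0) * gz ^ n0"
  by (simp add: tu_monom_power tu_monom_mult mult.commute)

lemma tu_monom_as_generator_product:
  assumes "(i, j) \<in> semigroupS n0 n1"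
  obtains a b c where "tu_monom i j = gx ^ a * gy ^ b * gz ^ c"
proof -
  obtain a b c where "i = a * 0 + b * n0 + c * n1" "j = a * n1 + b * (n1 - n0) + c * 0"
    using assms unfolding semigroupS_def by blast
  then have "tu_monom i j = gx ^ a * gy ^ b * gz ^ c"
    by (simp add: tu_monom_power tu_monom_mult ac_simps)
  then show thesis
    by (rule that)
qed

lemma derivations_agree_on_kS:
  fixes D D' :: "'k::field_char_0 poly poly \<Rightarrow> 'k poly poly"
  assumes D: "is_derivation kS D" and D': "is_derivation kS D'"
    and agree: "D gx = D' gx" "D gy = D' gy" "D gz = D' gz"
    and p: "p \<in> kS"
  shows "D p = D' p"
proof -
  have A: "subsemiring (kS :: 'k poly poly set)"
    by (rule subsemiring_semigroupS)
  have "p \<in> kS \<and> D p = D' p"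
    using p
  proof (induction p rule: semigroup_ring_induct)
    case zero
    show ?case
      using derivation_zero[OF D] derivation_zero[OF D'] zero_in_semigroup_ring by auto
  next
    case (add q r)
    then show ?case
      using derivation_add[OF D] derivation_add[OF D'] by (simp add: add_in_semigroup_ring)
  next
    case (monom c i j)
    obtain a b e where m: "(tu_monom i j :: 'k poly poly) = gx ^ a * gy ^ b * gz ^ e"
      using monom by (rule tu_monom_as_generator_product)
    have "D (tu_monom i j) = D' (tu_monom i j)"
      unfolding m using agree generators_in_kS by (intro derivations_agree_on_monomials[OF D D' A])
    moreover have "tu_monom i j \<in> (kS :: 'k poly poly set)"
      using monom by (rule tu_monom_in_semigroup_ring)
    ultimately show ?case
      using derivation_smult[OF D] derivation_smult[OF D'] by (simp add: smult_in_semigroup_ring)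
  qed
  then show ?thesis
    by blast
qed

lemma derivation_relation:
  fixes D :: "'k::field_char_0 poly poly \<Rightarrow> 'k poly poly"
  assumes D: "is_derivation kS D"
  shows "of_nat n1 * (tu_monom wt wu * D gy) =
    of_nat n0 * (tu_monom ((n0 - 1) * n1) ((n1 - n0) * n1) * D gz) +
    of_nat (n1 - n0) * (tu_monom (n0 * n1) ((n1 - n0 - 1) * n1) * D gx)"
proof -
  have A: "subsemiring (kS :: 'k poly poly set)"
    by (rule subsemiring_semigroupS)
  have "of_nat n1 * gy ^ (n1 - 1) * D gy = D (gy ^ n1)"
    using derivation_power[OF D A generators_in_kS(2), of n1] by simp
  also have "\<dots> = D (gx ^ (n1 - n0) * gz ^ n0)"
    by (simp only: generators_relation)
  also have "\<dots> = gx ^ (n1 - n0) * D (gz ^ n0) + gz ^ n0 * D (gx ^ (n1 - n0))"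
    by (rule derivation_mult[OF D subsemiring_power[OF A generators_in_kS(1)]
          subsemiring_power[OF A generators_in_kS(3)]])
  also have "\<dots> = of_nat n0 * (gx ^ (n1 - n0) * gz ^ (n0 - 1) * D gz) +
      of_nat (n1 - n0) * (gz ^ n0 * gx ^ (n1 - n0 - 1) * D gx)"
    using derivation_power[OF D A generators_in_kS(1), of "n1 - n0"]
      derivation_power[OF D A generators_in_kS(3), of n0] by (simp add: ac_simps)
  finally show ?thesis
    by (simp add: tu_monom_power tu_monom_mult wt_def wu_def ac_simps)
qed

lemma derivation_relation_tu_coeff:
  fixes D :: "'k::field_char_0 poly poly \<Rightarrow> 'k poly poly"
  assumes D: "is_derivation kS D"
  shows "of_nat n1 * tu_coeff (D gy) (a + int n0) (b + int n1 - int n0) =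
    of_nat n0 * tu_coeff (D gz) (a + int n1) b + of_nat (n1 - n0) * tu_coeff (D gx) a (b + int n1)"
proof -
  define P where "P = a + int n0 * int n1"
  define Q where "Q = b + (int n1 - int n0) * int n1"
  have exps: "int ((n0 - 1) * n1) = (int n0 - 1) * int n1" "int ((n1 - n0) * n1) = (int n1 - int n0) * int n1"
    "int (n0 * n1) = int n0 * int n1" "int ((n1 - n0 - 1) * n1) = (int n1 - int n0 - 1) * int n1"
    using n0_pos n0_less_n1 by (simp_all add: of_nat_diff)
  have "of_nat n1 * tu_coeff (D gy) (P - int n0 * (int n1 - 1)) (Q - (int n1 - 1) * (int n1 - int n0)) =
    of_nat n0 * tu_coeff (D gz) (P - (int n0 - 1) * int n1) (Q - (int n1 - int n0) * int n1) +
    of_nat (n1 - n0) * tu_coeff (D gx) (P - int n0 * int n1) (Q - (int n1 - int n0 - 1) * int n1)"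
    using arg_cong[OF derivation_relation[OF D], of "\<lambda>p. tu_coeff p P Q"]
    by (simp only: tu_coeff_add tu_coeff_of_nat_mult tu_coeff_tu_monom_mult exps int_wt int_wu)
  moreover have "P - int n0 * (int n1 - 1) = a + int n0" "Q - (int n1 - 1) * (int n1 - int n0) = b + int n1 - int n0"
    "P - (int n0 - 1) * int n1 = a + int n1" "Q - (int n1 - int n0) * int n1 = b"
    "P - int n0 * int n1 = a" "Q - (int n1 - int n0 - 1) * int n1 = b + int n1"
    unfolding P_def Q_def by (simp_all add: algebra_simps)
  ultimately show ?thesis
    by simp
qed

lemma derivation_generators_mem:
  fixes D :: "'k::field_char_0 poly poly \<Rightarrow> 'k poly poly"
  assumes D: "is_derivation kS D"
  shows "D gx \<in> kS" "D gy \<in> kS" "D gz \<in> kS"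
  using derivation_mem[OF D] generators_in_kS by auto

lemma derivation_z_support:
  fixes D :: "'k::field_char_0 poly poly \<Rightarrow> 'k poly poly"
  assumes D: "is_derivation kS D" and nonzero: "tu_coeff (D gz) a b \<noteq> 0"
  shows "inS (a - int n1) b \<or> inS (a - int wt) (b - int wu)"
proof (rule ccontr)
  assume not_shifted: "\<not> ?thesis"
  have "inS a b"
    using derivation_generators_mem(3)[OF D] nonzero semigroup_ring_iff_tu_coeff by blast
  with not_shifted have "\<not> inS (a - int n1 + int n0) (b + int n1 - int n0)"
    "\<not> inS (a - int n1) (b + int n1)"
    using notin_S_relation_partners_z by auto
  then have "tu_coeff (D gy) (a - int n1 + int n0) (b + int n1 - int n0) = 0"
    "tu_coeff (D gx) (a - int n1) (b + int n1) = 0"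
    using derivation_generators_mem[OF D] by (simp_all add: tu_coeff_eq_0_if_not_lattice_mem)
  then have "of_nat n0 * tu_coeff (D gz) a b = 0"
    using derivation_relation_tu_coeff[OF D, of "a - int n1" b] by simp
  with nonzero n0_pos show False
    by simp
qed

lemma derivation_x_support:
  fixes D :: "'k::field_char_0 poly poly \<Rightarrow> 'k poly poly"
  assumes D: "is_derivation kS D" and nonzero: "tu_coeff (D gx) a b \<noteq> 0"
  shows "inS a (b - int n1) \<or> inS (a - int wt) (b - int wu)"
proof (rule ccontr)
  assume not_shifted: "\<not> ?thesis"
  have "inS a b"
    using derivation_generators_mem(1)[OF D] nonzero semigroup_ring_iff_tu_coeff by blast
  with not_shifted have "\<not> inS (a + int n0) (b - int n0)" "\<not> inS (a + int n1) (b - int n1)"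
    using notin_S_relation_partners_x by auto
  then have "tu_coeff (D gy) (a + int n0) (b - int n0) = 0"
    "tu_coeff (D gz) (a + int n1) (b - int n1) = 0"
    using derivation_generators_mem[OF D] by (simp_all add: tu_coeff_eq_0_if_not_lattice_mem)
  then have "of_nat (n1 - n0) * tu_coeff (D gx) a b = 0"
    using derivation_relation_tu_coeff[OF D, of a "b - int n1"] by simp
  with nonzero n0_less_n1 show False
    by simp
qed

lemma derivations_agree_if_agree_on_x_z:
  fixes D D' :: "'k::field_char_0 poly poly \<Rightarrow> 'k poly poly"
  assumes D: "is_derivation kS D" and D': "is_derivation kS D'"
    and gx: "D gx = D' gx" and gz: "D gz = D' gz" and p: "p \<in> kS"
  shows "D p = D' p"
proof -
  have "of_nat n1 * (tu_monom wt wu * D gy) = of_nat n1 * (tu_monom wt wu * D' gy)"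
    unfolding derivation_relation[OF D] derivation_relation[OF D'] gz gx ..
  then have "(of_nat n1 * tu_monom wt wu) * D gy = (of_nat n1 * tu_monom wt wu) * D' gy"
    by (simp only: mult.assoc)
  moreover have "of_nat n1 * tu_monom wt wu \<noteq> (0 :: 'k poly poly)"
    using n0_less_n1 by (simp add: tu_monom_nonzero of_nat_poly)
  ultimately have gy: "D gy = D' gy"
    by simp
  show ?thesis
    by (rule derivations_agree_on_kS[OF D D' gx gy gz p])
qed

lemma derivation_z_x_decomposition:
  fixes D :: "'k::field_char_0 poly poly \<Rightarrow> 'k poly poly"
  assumes D: "is_derivation kS D"
  shows "\<exists>p1\<in>kS. \<exists>p2\<in>kS. D gz = gz * p1 + tu_monom wt wu * p2"
    and "\<exists>q1\<in>kS. \<exists>q2\<in>kS. D gx = gx * q1 + tu_monom wt wu * q2"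
  using semigroup_ring_split[of "D gz" "semigroupS n0 n1" n1 0 wt wu]
    semigroup_ring_split[of "D gx" "semigroupS n0 n1" 0 n1 wt wu]
    derivation_z_support[OF D] derivation_x_support[OF D] by auto

(* dT et wu maps z, and dU wt eu maps x, to n1 t^wt u^wu. *)
definition et :: nat where
  "et = wt + 1 - n1"

definition eu :: nat where
  "eu = wu + 1 - n1"

lemma n1_add_et: "n1 + et = wt + 1"
  using n1_le_wt by (simp add: et_def)

lemma n1_add_eu: "n1 + eu = wu + 1"
  using n1_le_wu by (simp add: eu_def)

abbreviation Der_gens :: "('k::field poly poly \<Rightarrow> 'k poly poly) set" where
  "Der_gens \<equiv> {dT 1 0, dT et wu, dU 0 1, dU wt eu}"

lemma images_of_generators:
  "dT a b gx = 0" "dU a b gz = 0"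
  "dT a b gz = (of_nat n1 * tu_monom (n1 + a - 1) b :: 'k::field poly poly)"
  "dU a b gx = (of_nat n1 * tu_monom a (n1 + b - 1) :: 'k::field poly poly)"
  by (simp_all add: dT_tu_monom dU_tu_monom)

lemma Der_gens_derivations:
  assumes "g \<in> Der_gens"
  shows "is_derivation kS (g :: 'k::field poly poly \<Rightarrow> _)"
proof -
  have "is_derivation kS (dT et wu :: 'k poly poly \<Rightarrow> _)"
  proof (rule is_derivation_dT)
    fix i j
    assume "(i, j) \<in> semigroupS n0 n1" "0 < i"
    then have "inS (int i + int wt - int n1) (int j + int wu)"
      by (intro inS_shift_t) simp_all
    moreover have "int (i + et - 1) = int i + int wt - int n1"
      using \<open>0 < i\<close> n1_add_et by linarith
    ultimately show "(i + et - 1, j + wu) \<in> semigroupS n0 n1"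
      by (metis lattice_mem_int of_nat_add)
  qed
  moreover have "is_derivation kS (dU wt eu :: 'k poly poly \<Rightarrow> _)"
  proof (rule is_derivation_dU)
    fix i j
    assume "(i, j) \<in> semigroupS n0 n1" "0 < j"
    then have "inS (int i + int wt) (int j + int wu - int n1)"
      by (intro inS_shift_u) simp_all
    moreover have "int (j + eu - 1) = int j + int wu - int n1"
      using \<open>0 < j\<close> n1_add_eu by linarith
    ultimately show "(i + wt, j + eu - 1) \<in> semigroupS n0 n1"
      by (metis lattice_mem_int of_nat_add)
  qed
  moreover have "is_derivation kS (dT 1 0 :: 'k poly poly \<Rightarrow> _)"
    "is_derivation kS (dU 0 1 :: 'k poly poly \<Rightarrow> _)"
    by (rule is_derivation_dT, simp, rule is_derivation_dU, simp)
  ultimately show ?thesis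
    using assms by blast
qed

lemma Der_gens_generate: "generates_Der (kS :: 'k::field_char_0 poly poly set) Der_gens"
  unfolding generates_Der_def
proof (intro allI impI)
  fix D :: "'k poly poly \<Rightarrow> 'k poly poly"
  assume D: "is_derivation kS D"
  obtain p1 p2 q1 q2 where pq: "p1 \<in> kS" "p2 \<in> kS" "q1 \<in> kS" "q2 \<in> kS"
    "D gz = gz * p1 + tu_monom wt wu * p2" "D gx = gx * q1 + tu_monom wt wu * q2"
    using derivation_z_x_decomposition[OF D] by blast
  define s :: "'k poly poly \<Rightarrow> 'k poly poly" where "s = smult [:inverse (of_nat n1):]"
  define c where "c g = (if g = dT 1 0 then s p1 else if g = dT et wu then s p2
    else if g = dU 0 1 then s q1 else s q2)" for g :: "'k poly poly \<Rightarrow> 'k poly poly"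
  define D' where "D' p = (\<Sum>g\<in>Der_gens. c g * g p)" for p
  have c_mem: "c g \<in> kS" for g
    using pq by (simp add: c_def s_def smult_in_semigroup_ring)
  have D'_expand: "D' p = s p1 * dT 1 0 p + s p2 * dT et wu p + s q1 * dU 0 1 p
      + s q2 * dU wt eu p" for p
    using wt_pos wu_pos
    by (simp add: D'_def c_def dT_ne_dU dT_ne_dU[symmetric] dT_eq_dT_iff dU_eq_dU_iff algebra_simps)
  have D': "is_derivation kS D'"
    unfolding D'_def using c_mem Der_gens_derivations
    by (intro is_derivation_linear_combination subsemiring_semigroupS) blast
  have n1: "n1 \<noteq> 0"
    using n0_less_n1 by simp
  have scale: "s r * (of_nat n1 * m) = m * r" for r m
    unfolding s_def smult_inverse_of_nat_cancel[OF n1] by (rule mult.commute)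
  have "D gx = D' gx" "D gz = D' gz"
    unfolding pq(5,6) D'_expand images_of_generators n1_add_et n1_add_eu add_diff_cancel_right'
    by (simp_all only: mult_zero_right add_0_right add_0_left scale)
  then have "D p = D' p" if "p \<in> kS" for p
    by (rule derivations_agree_if_agree_on_x_z[OF D D' _ _ that])
  then show "in_span kS Der_gens D"
    unfolding in_span_def
    by (rule_tac exI[of _ Der_gens], rule_tac exI[of _ c]) (simp add: c_mem D'_def)
qed

lemma Der_gens_independent:
  fixes g :: "'k::field_char_0 poly poly \<Rightarrow> 'k poly poly"
  assumes "g \<in> Der_gens"
  shows "\<not> in_span kS (Der_gens - {g}) g"
proof -
  note image_coeffs = images_of_generators n1_add_et n1_add_eu tu_coeff_tu_monom tu_coeff_mult_scaled_tu_monom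
  have n1: "(of_nat n1 :: 'k) \<noteq> 0"
    using n0_less_n1 by simp
  have outside: "tu_coeff c (int wt - int n1) (int wu) = 0" "tu_coeff c (int wt) (int wu - int n1) = 0"
    if "c \<in> kS" for c :: "'k poly poly"
    using that w_sub_z_notin_S w_sub_x_notin_S by (simp_all add: tu_coeff_eq_0_if_not_lattice_mem)
  from assms consider "g = dT 1 0" | "g = dT et wu" | "g = dU 0 1" | "g = dU wt eu"
    by blast
  then show ?thesis
  proof cases
    case 1
    show ?thesis
      unfolding 1 by (rule not_in_span_by_tu_coeff[OF generators_in_kS(3), of _ "int n1" 0])
        (use n1 wu_pos in \<open>auto simp: image_coeffs tu_coeff_outside\<close>)
  next
    case 2
    show ?thesis
      unfolding 2 by (rule not_in_span_by_tu_coeff[OF generators_in_kS(3), of _ "int wt" "int wu"])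
        (use n1 in \<open>auto simp: image_coeffs outside\<close>)
  next
    case 3
    show ?thesis
      unfolding 3 by (rule not_in_span_by_tu_coeff[OF generators_in_kS(1), of _ 0 "int n1"])
        (use n1 wt_pos in \<open>auto simp: image_coeffs tu_coeff_outside\<close>)
  next
    case 4
    show ?thesis
      unfolding 4 by (rule not_in_span_by_tu_coeff[OF generators_in_kS(1), of _ "int wt" "int wu"])
        (use n1 in \<open>auto simp: image_coeffs outside\<close>)
  qed
qed

theorem Der_gens_minimally_generate: "minimally_generates_Der (kS :: 'k::field_char_0 poly poly set) Der_gens"
  by (rule minimally_generates_DerI[OF _ Der_gens_generate Der_gens_independent])
    (blast intro: Der_gens_derivations)

end

lemma gen2_eq_UNIV_imp_eq_1:
  assumes "gen2 a b = UNIV" "1 < b"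
  shows "a = 1"
proof -
  have "1 \<in> gen2 a b"
    using assms(1) by simp
  then obtain x y where xy: "1 = x * a + y * b"
    unfolding gen2_def by blast
  have "y = 0"
  proof (rule ccontr)
    assume "y \<noteq> 0"
    then have "b \<le> y * b"
      by simp
    with xy assms(2) show False
      by linarith
  qed
  with xy show ?thesis
    by simp
qed

theorem proposition3p1:
  fixes n0 n1 :: nat
  assumes "0 < n0" and "n0 < n1" and "coprime n0 n1"
  defines "A \<equiv> (semigroup_ring (semigroupS n0 n1) :: 'k::field_char_0 poly poly set)"
  shows
   "(gen2 n0 n1 \<noteq> UNIV \<and> gen2 (n1 - n0) n1 \<noteq> UNIV \<longrightarrow>
       minimally_generates_Der A
         {dT 1 0, dT (n0 * (n1 - 1) + 1 - n1) ((n1 - 1) * (n1 - n0)),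
          dU 0 1, dU (n0 * (n1 - 1)) ((n1 - 1) * (n1 - n0) + 1 - n1)}) \<and>
    (gen2 n0 n1 = UNIV \<and> gen2 (n1 - n0) n1 \<noteq> UNIV \<longrightarrow>
       minimally_generates_Der A
         {dT 1 0, dT 0 (1 + (n1 - 2) * n1),
          dU 0 1, dU (n1 - 1) ((n1 - 1) * (n1 - 2))}) \<and>
    (gen2 n0 n1 \<noteq> UNIV \<and> gen2 (n1 - n0) n1 = UNIV \<longrightarrow>
       minimally_generates_Der A
         {dT 1 0, dT (n0 * (n1 - 1) + 1 - n1) (n1 - 1),
          dU 0 1, dU (n0 * (n1 - 1)) 0}) \<and>
    (gen2 n0 n1 = UNIV \<and> gen2 (n1 - n0) n1 = UNIV \<longrightarrow>
       minimally_generates_Der A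
         {dT 1 0, dT 0 1, dU 0 1, dU 1 0})"
proof -
  interpret coprime_pair n0 n1
    using assms(1-3) by unfold_locales
  have generic: "minimally_generates_Der A
      {dT 1 0, dT (n0 * (n1 - 1) + 1 - n1) ((n1 - 1) * (n1 - n0)),
       dU 0 1, dU (n0 * (n1 - 1)) ((n1 - 1) * (n1 - n0) + 1 - n1)}"
    unfolding A_def by (rule Der_gens_minimally_generate[unfolded et_def eu_def wt_def wu_def])
  have "2 \<le> n1"
    using assms(1,2) by simp
  then obtain m where m: "n1 = m + 2"
    by (metis add.commute le_add_diff_inverse)
  have "n0 = 1" if "gen2 n0 n1 = UNIV"
    using gen2_eq_UNIV_imp_eq_1[OF that] m by simp
  moreover have "n0 = m + 1" if "gen2 (n1 - n0) n1 = UNIV"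
    using gen2_eq_UNIV_imp_eq_1[OF that] m by simp
  ultimately show ?thesis
    using generic
    by (cases "gen2 n0 n1 = UNIV"; cases "gen2 (n1 - n0) n1 = UNIV") (simp_all add: m algebra_simps)
qed

end
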